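(* In the algorithm DOBGA described in the context, let $\mathbf{r}_i(t)=\mathbf{x}_i(t)-\mathbf{y}_i(t)$. If $\|\widetilde{\nabla}f_{t,i}(\mathbf{x})\|\le G_{1}$ for all $i\in[N]$, $t\in[T]$, $\mathbf{x}\in\mathcal{X}$, then $\|\mathbf{r}_{i}(t+1)\|\le\eta_{t}(1-1/e)G_{1}$ for all $t\in[T]$ and $i\in[N]$.
   Context: $\mathcal{X}=\prod_{l=1}^n[0,a_l]$, $\mathcal{K}\subseteq\mathcal{X}$ a bounded convex set. $N$ nodes on a connected undirected graph with neighbor sets $\mathcal{N}_i$; weight matrix $\mathbf{A}=[a_{ij}]\in\mathbb{R}_+^{N\times N}$ symmetric, doubly stochastic, $a_{ij}=0$ if $j\notin\mathcal{N}_i\cup\{i\}$. For each $t,i$, $\widetilde{\nabla}f_{t,i}$ is a stochastic gradient oracle of a function $f_{t,i}:\mathcal{X}\to\mathbb{R}_+$. Algorithm DOBGA with step sizes $\eta_t>0$: initialize $\mathbf{x}_i(1)\in\mathcal{K}$; for $t=1,\dots,T$ and each $i$, draw $z_i(t)\in[0,1]$ with $\Pr(\mathbf{Z}\le z)=\frac{e^{z-1}-1/e}{1-1/e}$, set $\mathbf{y}_i(t+1)=\sum_{j\in\mathcal{N}_i\cup\{i\}}a_{ij}\mathbf{x}_j(t)+\eta_t(1-1/e)\widetilde{\nabla}f_{t,i}(z_i(t)\mathbf{x}_i(t))$ and $\mathbf{x}_i(t+1)=\arg\min_{\mathbf{z}\in\mathcal{K}}\|\mathbf{z}-\mathbf{y}_i(t+1)\|$.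 *)

theory Defs
  imports "HOL-Analysis.Analysis"
begin

definition box_set :: "real^'n \<Rightarrow> (real^'n) set" where
  "box_set a = {x. \<forall>l. 0 \<le> x$l \<and> x$l \<le> a$l}"

definition connected_undirected_graph :: "nat \<Rightarrow> (nat \<Rightarrow> nat set) \<Rightarrow> bool" where
  "connected_undirected_graph N Nb \<longleftrightarrow>
     (\<forall>i\<in>{1..N}. Nb i \<subseteq> {1..N} \<and> i \<notin> Nb i) \<and>
     (\<forall>i\<in>{1..N}. \<forall>j\<in>{1..N}. j \<in> Nb i \<longleftrightarrow> i \<in> Nb j) \<and>
     (\<forall>i\<in>{1..N}. \<forall>j\<in>{1..N}. (i, j) \<in> {(u, v). v \<in> Nb u}\<^sup>*)"

definition admissible_weights :: "nat \<Rightarrow> (nat \<Rightarrow> nat set) \<Rightarrow> (nat \<Rightarrow> nat \<Rightarrow> real) \<Rightarrow> bool" where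
  "admissible_weights N Nb A \<longleftrightarrow>
     (\<forall>i\<in>{1..N}. \<forall>j\<in>{1..N}. A i j \<ge> 0 \<and> A i j = A j i) \<and>
     (\<forall>i\<in>{1..N}. (\<Sum>j=1..N. A i j) = 1) \<and>
     (\<forall>j\<in>{1..N}. (\<Sum>i=1..N. A i j) = 1) \<and>
     (\<forall>i\<in>{1..N}. \<forall>j\<in>{1..N}. j \<notin> Nb i \<union> {i} \<longrightarrow> A i j = 0)"

end

theory Submission
  imports Defs
begin

text \<open>Every iterate \<open>x\<^sub>j(t)\<close> lies in \<open>K\<close> (it is a projection or the initial
  point), so by convexity so does their consensus average; hence projecting \<open>y\<^sub>i(t+1)\<close>
  onto \<open>K\<close> costs at most the length of the gradient step added to that average, and
  that step is bounded by \<open>\<eta> t (1 - 1/e) G\<^sub>1\<close> because \<open>z x\<close> stays in the box.\<close>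

lemma is_arg_min_dist_le_perturbation:
  fixes c v p :: "'a::real_normed_vector"
  assumes "is_arg_min (\<lambda>w. norm (w - (c + v))) (\<lambda>w. w \<in> K) p" and "c \<in> K"
  shows "norm (p - (c + v)) \<le> norm v"
proof -
  have "norm (p - (c + v)) \<le> norm (c - (c + v))"
    using assms unfolding is_arg_min_def by (meson not_less)
  then show ?thesis by simp
qed

lemma scaleR_in_box_set:
  assumes "x \<in> box_set a" and "0 \<le> c" and "c \<le> 1"
  shows "c *\<^sub>R x \<in> box_set a"
  unfolding box_set_def
proof (intro CollectI allI conjI)
  fix l
  have "0 \<le> x $ l" and "x $ l \<le> a $ l"
    using assms(1) unfolding box_set_def by auto
  moreover have "c * x $ l \<le> x $ l"
    using \<open>0 \<le> x $ l\<close> assms(2,3) by (simp add: mult_left_le_one_le)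
  ultimately show "0 \<le> (c *\<^sub>R x) $ l" and "(c *\<^sub>R x) $ l \<le> a $ l"
    using assms(2) by auto
qed

lemma admissible_weights_neighbourhood_sum:
  assumes "admissible_weights N Nb A" and "i \<in> {1..N}" and "Nb i \<subseteq> {1..N}"
  shows "(\<Sum>j\<in>Nb i \<union> {i}. A i j) = 1"
proof -
  have "(\<Sum>j\<in>Nb i \<union> {i}. A i j) = (\<Sum>j=1..N. A i j)"
  proof (rule sum.mono_neutral_left)
    show "\<forall>j\<in>{1..N} - (Nb i \<union> {i}). A i j = 0"
      using assms(1,2) unfolding admissible_weights_def by blast
  qed (use assms(2,3) in auto)
  then show ?thesis
    using assms unfolding admissible_weights_def by simp
qed

lemma neighbourhood_average_in_convex:
  fixes x :: "nat \<Rightarrow> 'a::real_vector"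
  assumes "convex K" and "admissible_weights N Nb A"
    and "i \<in> {1..N}" and "Nb i \<subseteq> {1..N}" and "\<And>j. j \<in> {1..N} \<Longrightarrow> x j \<in> K"
  shows "(\<Sum>j\<in>Nb i \<union> {i}. A i j *\<^sub>R x j) \<in> K"
proof (rule convex_sum[OF _ \<open>convex K\<close>])
  show "finite (Nb i \<union> {i})"
    using assms(4) finite_subset by auto
  show "(\<Sum>j\<in>Nb i \<union> {i}. A i j) = 1"
    using admissible_weights_neighbourhood_sum assms(2-4) .
  show "\<And>j. j \<in> Nb i \<union> {i} \<Longrightarrow> 0 \<le> A i j" and "\<And>j. j \<in> Nb i \<union> {i} \<Longrightarrow> x j \<in> K"
    using assms(2-5) unfolding admissible_weights_def by auto
qed

theorem lemma15:
  fixes a :: "real^'n" and K :: "(real^'n) set"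
    and N T :: nat and Nb :: "nat \<Rightarrow> nat set" and A :: "nat \<Rightarrow> nat \<Rightarrow> real"
    and g :: "nat \<Rightarrow> nat \<Rightarrow> real^'n \<Rightarrow> real^'n"
    and \<eta> :: "nat \<Rightarrow> real" and G1 :: real
    and x y :: "nat \<Rightarrow> nat \<Rightarrow> real^'n" and z :: "nat \<Rightarrow> nat \<Rightarrow> real"
  assumes a_nonneg: "\<forall>l. a$l \<ge> 0"
    and K_sub: "K \<subseteq> box_set a" and K_convex: "convex K" and K_bounded: "bounded K"
    and graph: "connected_undirected_graph N Nb"
    and weights: "admissible_weights N Nb A"
    and eta_pos: "\<forall>t. \<eta> t > 0"
    and init: "\<forall>i\<in>{1..N}. x i 1 \<in> K"
    and z_range: "\<forall>t\<in>{1..T}. \<forall>i\<in>{1..N}. z i t \<in> {0..1}"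
    and y_def: "\<forall>t\<in>{1..T}. \<forall>i\<in>{1..N}.
        y i (t + 1) = (\<Sum>j\<in>Nb i \<union> {i}. A i j *\<^sub>R x j t)
                      + (\<eta> t * (1 - 1 / exp 1)) *\<^sub>R g t i (z i t *\<^sub>R x i t)"
    and x_proj: "\<forall>t\<in>{1..T}. \<forall>i\<in>{1..N}.
        is_arg_min (\<lambda>w. norm (w - y i (t + 1))) (\<lambda>w. w \<in> K) (x i (t + 1))"
    and grad_bound: "\<forall>t\<in>{1..T}. \<forall>i\<in>{1..N}. \<forall>v\<in>box_set a. norm (g t i v) \<le> G1"
  shows "\<forall>t\<in>{1..T}. \<forall>i\<in>{1..N}. norm (x i (t + 1) - y i (t + 1)) \<le> \<eta> t * (1 - 1 / exp 1) * G1"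
proof (intro ballI)
  fix t i assume t: "t \<in> {1..T}" and i: "i \<in> {1..N}"
  define c where "c = \<eta> t * (1 - 1 / exp 1)"
  have c_nonneg: "0 \<le> c"
    using eta_pos unfolding c_def by (simp add: less_imp_le)
  have x_in_K: "x j t \<in> K" if "j \<in> {1..N}" for j
  proof (cases "t = 1")
    case False
    then have "t - 1 \<in> {1..T}" and "t - 1 + 1 = t" using t by auto
    then show ?thesis using x_proj that unfolding is_arg_min_def by metis
  qed (use init that in simp)
  have average_in_K: "(\<Sum>j\<in>Nb i \<union> {i}. A i j *\<^sub>R x j t) \<in> K"
    using graph i unfolding connected_undirected_graph_def
    by (intro neighbourhood_average_in_convex[OF K_convex weights i] x_in_K) auto
  have y_eq: "y i (t + 1) = (\<Sum>j\<in>Nb i \<union> {i}. A i j *\<^sub>R x j t) + c *\<^sub>R g t i (z i t *\<^sub>R x i t)"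
    using y_def t i unfolding c_def by blast
  have "is_arg_min (\<lambda>w. norm (w - y i (t + 1))) (\<lambda>w. w \<in> K) (x i (t + 1))"
    using x_proj t i by blast
  then have "norm (x i (t + 1) - y i (t + 1)) \<le> norm (c *\<^sub>R g t i (z i t *\<^sub>R x i t))"
    unfolding y_eq using average_in_K by (rule is_arg_min_dist_le_perturbation)
  also have "\<dots> = c * norm (g t i (z i t *\<^sub>R x i t))"
    using c_nonneg by simp
  also have "\<dots> \<le> c * G1"
  proof (intro mult_left_mono c_nonneg)
    have "z i t *\<^sub>R x i t \<in> box_set a"
      using x_in_K[OF i] K_sub z_range t i by (intro scaleR_in_box_set) auto
    then show "norm (g t i (z i t *\<^sub>R x i t)) \<le> G1"
      using grad_bound t i by blast
  qed
  finally show "norm (x i (t + 1) - y i (t + 1)) \<le> \<eta> t * (1 - 1 / exp 1) * G1"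
    unfolding c_def .
qed

end
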